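(* Let $n\ge16$ be such that $K=n/\log_2n$ is an integer, let $0\le c<1$, $0<\delta\le q$ with $K(1-c)\ge16\ln n$, and let $\mathbf A(\lambda)=\begin{bmatrix}0&1-\delta\lambda\\-c&1+c-q\lambda\end{bmatrix}$. If $\lambda\ge\frac{4(1-c)\ln n}{(q-c\delta)K}$, $\delta\lambda\le1$ and $q\lambda\le1+c$, then $$\|\mathbf A^K(\lambda)\|\le\frac{\sqrt6}{n^2\log_2n}\le1.$$
   Context: $\|\cdot\|$ denotes the spectral norm. *)

theory Defs
  imports "HOL-Analysis.Analysis"
begin

primrec matpow :: "real^'n^'n \<Rightarrow> nat \<Rightarrow> real^'n^'n" where
  "matpow A 0 = mat 1"
| "matpow A (Suc k) = A ** matpow A k"

definition spec_norm :: "real^'n^'n \<Rightarrow> real" where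
  "spec_norm A = onorm (\<lambda>x. A *v x)"

definition Amat :: "real \<Rightarrow> real \<Rightarrow> real \<Rightarrow> real \<Rightarrow> real^2^2" where
  "Amat c \<delta> q t = vector [vector [0, 1 - \<delta> * t], vector [- c, 1 + c - q * t]]"

end

theory Submission
  imports Defs
begin

text \<open>Let b and p be the trace and determinant of a 2x2 matrix A, and U_k the Lucas sequence
  of z^2 - b z + p. By Cayley-Hamilton, A^(k+1) = U_(k+1) A - p U_k I, and
  U_k = sum_(i<k) z^i w^(k-1-i) in terms of the roots z, w, so |U_k| <= k r^(k-1) as soon as both
  roots lie in the disc of radius r. For A(lambda) the lower bound on lambda puts the roots in the
  disc of radius 1 - t, t = 4 ln n / K, whence
  ||A(lambda)^K|| <= 5 K (1 - t)^(K-2) <= 5 K exp(-t (K-2)) <= 5 K / (6 n^3) < 1 / (n^2 log2 n).\<close>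

fun lucas_seq :: "'a::comm_ring_1 \<Rightarrow> 'a \<Rightarrow> nat \<Rightarrow> 'a" where
  "lucas_seq b p 0 = 0"
| "lucas_seq b p (Suc 0) = 1"
| "lucas_seq b p (Suc (Suc k)) = b * lucas_seq b p (Suc k) - p * lucas_seq b p k"

lemma of_real_lucas_seq:
  "of_real (lucas_seq b p k) = lucas_seq (of_real b) (of_real p) k"
  by (induction b p k rule: lucas_seq.induct) simp_all

lemma sum_root_powers_Suc:
  fixes z w :: "'a::comm_ring_1"
  shows "(\<Sum>i<Suc k. z ^ i * w ^ (k - i)) = z ^ k + w * (\<Sum>i<k. z ^ i * w ^ (k - 1 - i))"
proof -
  have "w * z ^ i * w ^ (k - 1 - i) = z ^ i * w ^ (k - i)" if "i < k" for i
  proof -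
    have "k - i = Suc (k - 1 - i)" using that by simp
    then show ?thesis by (simp add: algebra_simps)
  qed
  then show ?thesis
    by (simp add: sum_distrib_left mult.assoc[symmetric] add.commute)
qed

lemma lucas_seq_eq_sum_root_powers:
  fixes z w :: "'a::comm_ring_1"
  shows "lucas_seq (z + w) (z * w) k = (\<Sum>i<k. z ^ i * w ^ (k - 1 - i))"
proof (induction "z + w" "z * w" k rule: lucas_seq.induct)
  case (3 k)
  define S where "S j = (\<Sum>i<j. z ^ i * w ^ (j - 1 - i))" for j
  have S_Suc: "S (Suc j) = z ^ j + w * S j" for j
    unfolding S_def using sum_root_powers_Suc[of z w j] by simp
  have "(z + w) * S (Suc k) - z * w * S k = z * (S (Suc k) - w * S k) + w * S (Suc k)"
    by (simp add: algebra_simps)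
  also have "\<dots> = S (Suc (Suc k))"
    unfolding S_Suc[of "Suc k"] S_Suc[of k] by (simp add: algebra_simps)
  finally show ?case using 3 by (simp add: S_def)
qed simp_all

lemma norm_lucas_seq_le:
  fixes z w :: "'a::real_normed_field"
  assumes "norm z \<le> r" "norm w \<le> r"
  shows "norm (lucas_seq (z + w) (z * w) k) \<le> real k * r ^ (k - 1)"
proof -
  have "0 \<le> r"
    using norm_ge_zero[of z] assms(1) by linarith
  have "norm (z ^ i * w ^ (k - 1 - i)) \<le> r ^ (k - 1)" if "i < k" for i
  proof -
    have "norm (z ^ i * w ^ (k - 1 - i)) \<le> r ^ i * r ^ (k - 1 - i)"
      unfolding norm_mult norm_power
      by (intro mult_mono power_mono assms zero_le_power \<open>0 \<le> r\<close> norm_ge_zero)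
    also have "\<dots> = r ^ (k - 1)"
      using that by (simp flip: power_add)
    finally show ?thesis .
  qed
  then have "norm (\<Sum>i<k. z ^ i * w ^ (k - 1 - i)) \<le> (\<Sum>i<k. r ^ (k - 1))"
    by (intro sum_norm_le) simp
  then show ?thesis
    by (simp add: lucas_seq_eq_sum_root_powers)
qed

lemma real_quadratic_roots_in_cball:
  fixes b p r :: real
  assumes "0 \<le> b" "b \<le> 2 * r" "p \<le> r\<^sup>2" "b * r \<le> r\<^sup>2 + p"
  obtains z w :: complex where "z + w = of_real b" "z * w = of_real p" "cmod z \<le> r" "cmod w \<le> r"
proof (cases "4 * p \<le> b\<^sup>2")
  case True
  define d where "d = sqrt (b\<^sup>2 - 4 * p)"
  have d: "0 \<le> d" "d\<^sup>2 = b\<^sup>2 - 4 * p"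
    using True by (simp_all add: d_def)
  have "(2 * r - b)\<^sup>2 = d\<^sup>2 + 4 * (r\<^sup>2 + p - b * r)"
    using d by (simp add: power2_diff power_mult_distrib algebra_simps)
  then have "d\<^sup>2 \<le> (2 * r - b)\<^sup>2"
    using assms(4) by simp
  moreover have "0 \<le> 2 * r - b"
    using assms(2) by simp
  ultimately have "d \<le> 2 * r - b"
    by (rule power2_le_imp_le)
  then have "\<bar>(b + d) / 2\<bar> \<le> r" "\<bar>(b - d) / 2\<bar> \<le> r"
    using assms(1,2) d(1) by (simp_all add: abs_le_iff)
  moreover have "(b + d) / 2 + (b - d) / 2 = b" "(b + d) / 2 * ((b - d) / 2) = p"
    using d(2) by (simp_all add: field_simps power2_eq_square)
  ultimately show ?thesis
    using that[of "of_real ((b + d) / 2)" "of_real ((b - d) / 2)"]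
    by (metis norm_of_real of_real_add of_real_mult)
next
  case False
  define e where "e = sqrt (4 * p - b\<^sup>2)"
  have "e\<^sup>2 = 4 * p - b\<^sup>2"
    using False by (simp add: e_def)
  then have sum_sq: "(b / 2)\<^sup>2 + (e / 2)\<^sup>2 = p"
    by (simp add: field_simps)
  have "sqrt p \<le> r"
    using assms(1,2) real_sqrt_le_mono[OF assms(3)] by simp
  then have "cmod (Complex (b / 2) (e / 2)) \<le> r" "cmod (Complex (b / 2) (- e / 2)) \<le> r"
    by (simp_all add: complex_norm sum_sq)
  moreover have "Complex (b / 2) (e / 2) * Complex (b / 2) (- e / 2) = of_real p"
    using sum_sq by (simp add: complex_eq_iff power2_eq_square)
  ultimately show ?thesis
    using that[of "Complex (b / 2) (e / 2)" "Complex (b / 2) (- e / 2)"]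
    by (simp add: complex_eq_iff)
qed

lemma abs_lucas_seq_le:
  fixes b p r :: real
  assumes "0 \<le> b" "b \<le> 2 * r" "p \<le> r\<^sup>2" "b * r \<le> r\<^sup>2 + p"
  shows "\<bar>lucas_seq b p k\<bar> \<le> real k * r ^ (k - 1)"
proof -
  obtain z w :: complex where zw: "z + w = of_real b" "z * w = of_real p" "cmod z \<le> r" "cmod w \<le> r"
    using real_quadratic_roots_in_cball[OF assms] .
  have "\<bar>lucas_seq b p k\<bar> = cmod (lucas_seq (z + w) (z * w) k)"
    unfolding zw(1,2) of_real_lucas_seq[symmetric] by simp
  also have "\<dots> \<le> real k * r ^ (k - 1)"
    using norm_lucas_seq_le[OF zw(3,4)] .
  finally show ?thesis .
qed

lemma spec_norm_diff_le: "spec_norm (A - B) \<le> spec_norm A + spec_norm B"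
proof -
  have "spec_norm (A - B) = onorm (\<lambda>x. A *v x + - (B *v x))"
    by (simp add: spec_norm_def matrix_vector_mult_diff_rdistrib)
  also have "\<dots> \<le> onorm ((*v) A) + onorm (\<lambda>x. - (B *v x))"
    by (intro onorm_triangle bounded_linear_minus) simp_all
  finally show ?thesis
    by (simp add: spec_norm_def onorm_neg)
qed

lemma spec_norm_scaleR: "spec_norm (r *\<^sub>R A) = \<bar>r\<bar> * spec_norm A"
  unfolding spec_norm_def scaleR_matrix_vector_assoc[symmetric]
  by (simp add: onorm_scaleR)

lemma spec_norm_mat_1: "spec_norm (mat 1) = 1"
  by (simp add: spec_norm_def onorm_id)

lemma spec_norm_le_sum_abs: "spec_norm A \<le> (\<Sum>i\<in>UNIV. \<Sum>j\<in>UNIV. \<bar>A $ i $ j\<bar>)"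
  unfolding spec_norm_def by (rule onorm_le_matrix_component_sum)

lemma cayley_hamilton_2x2:
  fixes A :: "real^2^2"
  shows "A ** A = trace A *\<^sub>R A - det A *\<^sub>R mat 1"
  by (simp add: vec_eq_iff forall_2 matrix_matrix_mult_def sum_2 mat_def trace_def det_2 algebra_simps)

lemma matpow_Suc_eq_lucas_seq:
  fixes A :: "real^2^2"
  shows "matpow A (Suc k) = lucas_seq (trace A) (det A) (Suc k) *\<^sub>R A
    - (det A * lucas_seq (trace A) (det A) k) *\<^sub>R mat 1"
proof (induction k)
  case (Suc k)
  let ?u = "lucas_seq (trace A) (det A)"
  have "matpow A (Suc (Suc k)) = A ** (?u (Suc k) *\<^sub>R A - (det A * ?u k) *\<^sub>R mat 1)"
    using Suc by simp
  also have "\<dots> = ?u (Suc k) *\<^sub>R (A ** A) - (det A * ?u k) *\<^sub>R A"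
    by (simp add: vec_eq_iff forall_2 matrix_matrix_mult_def sum_2 mat_def algebra_simps)
  also have "\<dots> = ?u (Suc (Suc k)) *\<^sub>R A - (det A * ?u (Suc k)) *\<^sub>R mat 1"
    unfolding cayley_hamilton_2x2 by (simp add: algebra_simps)
  finally show ?case .
qed simp

lemma spec_norm_matpow_Suc_le:
  fixes A :: "real^2^2"
  shows "spec_norm (matpow A (Suc k)) \<le> \<bar>lucas_seq (trace A) (det A) (Suc k)\<bar> * spec_norm A
    + \<bar>det A\<bar> * \<bar>lucas_seq (trace A) (det A) k\<bar>"
  unfolding matpow_Suc_eq_lucas_seq
  using spec_norm_diff_le spec_norm_scaleR spec_norm_mat_1 by (metis abs_mult mult.right_neutral)

lemma trace_Amat: "trace (Amat c \<delta> q t) = 1 + c - q * t"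
  by (simp add: Amat_def trace_def sum_2)

lemma det_Amat: "det (Amat c \<delta> q t) = c * (1 - \<delta> * t)"
  by (simp add: Amat_def det_2)

text \<open>For \<open>b = 1 + c - Q\<close> and \<open>p = c * (1 - D)\<close>, the trace and determinant of
  \<^const>\<open>Amat\<close> with \<open>D = \<delta> * lam\<close> and \<open>Q = q * lam\<close>, these are the hypotheses of
  \<open>abs_lucas_seq_le\<close> for \<open>r = 1 - t\<close>: both eigenvalues have modulus at most \<open>1 - t\<close>.\<close>

lemma Amat_char_poly_roots_conditions:
  fixes c D Q t :: real
  assumes "0 \<le> c" "0 \<le> t" "2 * t \<le> 1 - c" "0 \<le> D" "D \<le> Q" "Q \<le> 1 + c"
    and "(1 - c) * t \<le> Q - c * D"
  shows "0 \<le> 1 + c - Q" "1 + c - Q \<le> 2 * (1 - t)" "c * (1 - D) \<le> (1 - t)\<^sup>2"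
    "(1 + c - Q) * (1 - t) \<le> (1 - t)\<^sup>2 + c * (1 - D)"
proof -
  show "0 \<le> 1 + c - Q"
    using assms(6) by simp
  show "1 + c - Q \<le> 2 * (1 - t)"
    using assms(3-5) by simp
  have "c * (1 - D) \<le> c"
    using assms(1,4) by (simp add: algebra_simps)
  also have "\<dots> \<le> 1 - 2 * t + t\<^sup>2"
    using assms(3) zero_le_power2[of t] by linarith
  finally show "c * (1 - D) \<le> (1 - t)\<^sup>2"
    by (simp add: power2_diff)
  have gap: "(1 - t)\<^sup>2 + c * (1 - D) - (1 + c - Q) * (1 - t) = Q * (1 - t) - c * D - (1 - c) * t + t\<^sup>2"
    by (simp add: power2_diff algebra_simps)
  have "0 \<le> Q * (1 - t) - c * D - (1 - c) * t + t\<^sup>2"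
  proof (cases "t \<le> Q")
    case True
    have "0 \<le> (Q - t) * (1 - c - t) + c * (Q - D)"
      using True assms by simp
    then show ?thesis
      by (simp add: power2_eq_square algebra_simps)
  next
    case False
    have "0 \<le> t * (t - Q) + (Q - c * D - (1 - c) * t)"
      using False assms by simp
    then show ?thesis
      by (simp add: power2_eq_square algebra_simps)
  qed
  then show "(1 + c - Q) * (1 - t) \<le> (1 - t)\<^sup>2 + c * (1 - D)"
    using gap by linarith
qed

lemma spec_norm_matpow_le:
  fixes A :: "real^2^2"
  assumes "0 \<le> trace A" "trace A \<le> 2 * r" "det A \<le> r\<^sup>2" "trace A * r \<le> r\<^sup>2 + det A"
    and "r \<le> 1" "\<bar>det A\<bar> \<le> 1" "0 < k"
  shows "spec_norm (matpow A k) \<le> (spec_norm A + 1) * real k * r ^ (k - 2)"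
proof -
  let ?u = "lucas_seq (trace A) (det A)"
  have r: "0 \<le> r"
    using assms(1,2) by simp
  have u: "\<bar>?u j\<bar> \<le> real j * r ^ (j - 1)" for j
    using assms(1-4) by (rule abs_lucas_seq_le)
  have norm_A: "0 \<le> spec_norm A"
    unfolding spec_norm_def by (simp add: onorm_pos_le)
  obtain m where m: "k = Suc m"
    using assms(7) gr0_implies_Suc by blast
  have "spec_norm (matpow A (Suc m)) \<le> \<bar>?u (Suc m)\<bar> * spec_norm A + 1 * \<bar>?u m\<bar>"
    using spec_norm_matpow_Suc_le[of A m] assms(6) mult_right_mono[of "\<bar>det A\<bar>" 1 "\<bar>?u m\<bar>"]
    by simp
  also have "\<dots> \<le> real (Suc m) * r ^ (m - 1) * spec_norm A + real (Suc m) * r ^ (m - 1)"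
  proof (intro add_mono mult_right_mono norm_A)
    have "r ^ m \<le> r ^ (m - 1)"
      using r assms(5) by (intro power_decreasing) simp_all
    then show "\<bar>?u (Suc m)\<bar> \<le> real (Suc m) * r ^ (m - 1)"
      by (intro order_trans[OF u[of "Suc m"]]) simp
    show "1 * \<bar>?u m\<bar> \<le> real (Suc m) * r ^ (m - 1)"
      using u[of m] mult_right_mono[of "real m" "real (Suc m)" "r ^ (m - 1)"] r by simp
  qed
  finally show ?thesis
    using m by (simp add: algebra_simps)
qed

lemma spec_norm_matpow_Amat_le:
  assumes "0 \<le> c" "c < 1" "0 < \<delta>" "\<delta> \<le> q" "0 \<le> t" "2 * t \<le> 1 - c"
    and "(1 - c) * t / (q - c * \<delta>) \<le> lam" "\<delta> * lam \<le> 1" "q * lam \<le> 1 + c" "0 < k"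
  shows "spec_norm (matpow (Amat c \<delta> q lam) k) \<le> 5 * real k * (1 - t) ^ (k - 2)"
proof -
  have "c * \<delta> < \<delta>"
    using assms(2,3) mult_strict_right_mono[of c 1 \<delta>] by simp
  then have qcd: "0 < q - c * \<delta>"
    using assms(4) by simp
  have "0 \<le> (1 - c) * t / (q - c * \<delta>)"
    using assms(2,5) qcd by simp
  then have lam_nonneg: "0 \<le> lam"
    using assms(7) by linarith
  have lam: "(1 - c) * t \<le> (q - c * \<delta>) * lam"
    using assms(7) qcd by (simp add: pos_divide_le_eq mult.commute)
  have D: "0 \<le> \<delta> * lam" "\<delta> * lam \<le> q * lam"
    using assms(3,4) lam_nonneg by (simp_all add: mult_right_mono)
  define A where "A = Amat c \<delta> q lam"
  have "spec_norm A \<le> 4"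
    using spec_norm_le_sum_abs[of A] D assms(1,5,6,8,9)
    by (simp add: A_def Amat_def sum_2)
  moreover have "\<bar>det A\<bar> \<le> 1"
    using D assms(1,5,6,8) by (simp add: A_def det_Amat abs_mult) (rule mult_le_one; linarith)
  moreover note Amat_char_poly_roots_conditions[OF assms(1,5,6) D assms(9)]
  ultimately have "spec_norm (matpow A k) \<le> (spec_norm A + 1) * real k * (1 - t) ^ (k - 2)"
    using lam assms(5,10)
    by (intro spec_norm_matpow_le) (simp_all add: A_def trace_Amat det_Amat algebra_simps)
  also have "\<dots> \<le> 5 * real k * (1 - t) ^ (k - 2)"
    using \<open>spec_norm A \<le> 4\<close> assms(1,5,6) by (intro mult_right_mono zero_le_power) simp_all
  finally show ?thesis
    by (simp add: A_def)
qed

lemma one_minus_four_ln_div_pow_le: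
  fixes n K :: nat
  assumes "36 \<le> n" "16 * ln n \<le> K"
  shows "(1 - 4 * ln n / K) ^ (K - 2) \<le> 1 / (6 * real n ^ 3)"
proof -
  define t where "t = 4 * ln n / K"
  have n: "0 < real n"
    using assms(1) by simp
  have "1 \<le> ln (real n)"
    using assms(1) ln_ge_iff[of n 1] exp_le by simp
  then have K: "16 \<le> K"
    using assms(2) by linarith
  have t: "0 \<le> t" "t \<le> 1" "16 * t \<le> 4 * ln n"
    using assms K \<open>1 \<le> ln (real n)\<close> by (simp_all add: t_def field_simps)
  have "2 * ln 6 = ln (36 :: real)"
    using ln_realpow[of "6 :: real" 2] by simp
  then have ln_6: "2 * ln 6 \<le> ln (real n)"
    using assms(1) by simp
  have "real (K - 2) * t = 4 * ln n - 2 * t"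
    using K by (simp add: t_def of_nat_diff field_simps)
  then have exponent: "ln (6 * real n ^ 3) \<le> real (K - 2) * t"
    using n t(3) ln_6 by (simp add: ln_mult ln_realpow)
  have "(1 - t) ^ (K - 2) \<le> exp (- t) ^ (K - 2)"
    using t(2) exp_ge_add_one_self[of "- t"] by (intro power_mono) simp_all
  also have "\<dots> = exp (- (real (K - 2) * t))"
    by (simp flip: exp_of_nat_mult)
  also have "\<dots> \<le> exp (- ln (6 * real n ^ 3))"
    using exponent by simp
  also have "\<dots> = 1 / (6 * real n ^ 3)"
    using n by (simp add: exp_minus inverse_eq_divide)
  finally show ?thesis
    by (simp add: t_def)
qed

lemma log2_ge_4:
  assumes "16 \<le> x"
  shows "4 \<le> log 2 x"
proof -
  have "log 2 16 = (4 :: real)"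
    using log_pow_cancel[of 2 4] by simp
  moreover have "log 2 16 \<le> log 2 x"
    using assms by simp
  ultimately show ?thesis
    by simp
qed

lemma block_length_bounds:
  fixes n K :: nat
  assumes "16 \<le> n" "real K = n / log 2 n" "0 \<le> c" "16 * ln n \<le> real K * (1 - c)"
  shows "16 * ln n \<le> K" "16 \<le> K" "36 \<le> n"
proof -
  have "1 \<le> ln (real n)"
    using assms(1) ln_ge_iff[of n 1] exp_le by simp
  have "16 * ln n \<le> real K * (1 - c)"
    using assms(4) .
  also have "\<dots> \<le> real K"
    using assms(3) by (simp add: mult_left_le)
  finally show "16 * ln n \<le> K" .
  then show K: "16 \<le> K"
    using \<open>1 \<le> ln (real n)\<close> by linarith
  have "real n = real K * log 2 n"
    using assms(1,2) log2_ge_4[of n] by simp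
  also have "\<dots> \<ge> 16 * 4"
    using K log2_ge_4[of n] assms(1) by (intro mult_mono) simp_all
  finally show "36 \<le> n"
    by simp
qed

lemma block_decay_le_sqrt6_bound:
  fixes n K :: nat
  assumes "36 \<le> n" "real K = n / log 2 n" "16 * ln n \<le> K"
  shows "5 * real K * (1 - 4 * ln n / K) ^ (K - 2) \<le> sqrt 6 / (real n ^ 2 * log 2 n)"
proof -
  have lg: "0 < log 2 n" "real n / real K = log 2 n"
    using assms(1,2) by (simp_all add: field_simps)
  have "5 * real K * (1 - 4 * ln n / K) ^ (K - 2) \<le> 5 * real K * (1 / (6 * real n ^ 3))"
    using one_minus_four_ln_div_pow_le[OF assms(1,3)] by (intro mult_left_mono) simp_all
  also have "\<dots> = (5 / 6) / (real n ^ 2 * log 2 n)"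
    unfolding lg(2)[symmetric] using assms(1) lg(1)
    by (simp add: field_simps power3_eq_cube power2_eq_square)
  also have "\<dots> \<le> sqrt 6 / (real n ^ 2 * log 2 n)"
  proof (rule divide_right_mono)
    have "1 \<le> sqrt (6 :: real)"
      by simp
    then show "5 / 6 \<le> sqrt (6 :: real)"
      by linarith
  qed (use lg(1) in simp)
  finally show ?thesis .
qed

lemma sqrt6_div_le_1:
  fixes n :: nat
  assumes "16 \<le> n"
  shows "sqrt 6 / (real n ^ 2 * log 2 n) \<le> 1"
proof -
  have "sqrt 6 \<le> sqrt (4 ^ 2)"
    by (rule real_sqrt_le_mono) simp
  also have "\<dots> \<le> 1 * log 2 n"
    using log2_ge_4[of n] assms by simp
  also have "\<dots> \<le> real n ^ 2 * log 2 n"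
    using log2_ge_4[of n] assms by (intro mult_right_mono) simp_all
  finally show ?thesis
    using log2_ge_4[of n] assms by simp
qed

theorem mainTheorem13:
  fixes n K :: nat and c \<delta> q lam :: real
  assumes "n \<ge> 16"
    and "real K = real n / log 2 (real n)"
    and "0 \<le> c" "c < 1"
    and "0 < \<delta>" "\<delta> \<le> q"
    and "real K * (1 - c) \<ge> 16 * ln (real n)"
    and "lam \<ge> 4 * (1 - c) * ln (real n) / ((q - c * \<delta>) * real K)"
    and "\<delta> * lam \<le> 1"
    and "q * lam \<le> 1 + c"
  shows "spec_norm (matpow (Amat c \<delta> q lam) K) \<le> sqrt 6 / (real n ^ 2 * log 2 (real n))
       \<and> sqrt 6 / (real n ^ 2 * log 2 (real n)) \<le> 1"
proof -
  define t where "t = 4 * ln n / K"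
  have K: "16 * ln n \<le> K" "16 \<le> K" and n: "36 \<le> n"
    using block_length_bounds[OF assms(1,2,3,7)] by simp_all
  have "0 \<le> ln (real n)"
    using assms(1) by simp
  then have t: "0 \<le> t" "2 * t \<le> 1 - c"
    using assms(7) K by (simp_all add: t_def field_simps)
  have "(1 - c) * t / (q - c * \<delta>) = 4 * (1 - c) * ln (real n) / ((q - c * \<delta>) * real K)"
    by (simp add: t_def mult_ac)
  then have "spec_norm (matpow (Amat c \<delta> q lam) K) \<le> 5 * real K * (1 - t) ^ (K - 2)"
    using t assms(3-6,8-10) K by (intro spec_norm_matpow_Amat_le) simp_all
  also have "\<dots> \<le> sqrt 6 / (real n ^ 2 * log 2 n)"
    unfolding t_def using block_decay_le_sqrt6_bound[OF n assms(2) K(1)] .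
  finally show ?thesis
    using sqrt6_div_le_1[OF assms(1)] by simp
qed

end
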